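(* Fix an instance and a set $S$ of its jobs (e.g. the jobs of an optimum schedule). With respect to the random hierarchical decomposition (random offset $r_0$ chosen uniformly in $[0,T/q]$), the expected number of jobs of $S$ that are span-crossing is at most $\frac{\lambda+1}{q}|S|=O(\varepsilon|S|)$.
   Context: Jobs $j$ have integer release time $r_j$, deadline $d_j$ and processing time $p_j$ in $[0,T]$; $span_j=[r_j,d_j]$ and $|span_j|=d_j-r_j$. Fix $\varepsilon>0$ with $q=1/\varepsilon^2$ an integer, $\lambda=1/\varepsilon=\varepsilon q$, $k=\log_q T$ (assume $T$ is a power of $q$), and $\ell_i=T/q^{i+1}$ for $i\ge 0$. Random hierarchical decomposition: pick $r_0$ uniformly at random in $[0,T/q]$; for each $0\le i\le k$, the partition $I_i$ of $[0,T]$ consists of the intervals between consecutive points of $\{0,T\}\cup\big(\{r_0+s\ell_i: s\in\mathbb{Z}\}\cap(0,T)\big)$, so all intervals of $I_i$ have length $\ell_i$ except possibly the first and last, whose lengths sum to $\ell_i$; each interval of $I_i$ is a union of $q$ consecutive intervals of $I_{i+1}$ (first/last possibly fewer). Job classes: $j\in\mathcal{J}_0$ if $|span_j|\ge\lambda\ell_0$; $j\in\mathcal{J}_i$ ($1\le i\le k$) if $\lambda\ell_i\le|span_j|<\lambda\ell_{i-1}$; $j\in\mathcal{J}_{k+1}$ if $|span_j|<\lambda\ell_k$. A job $j$ is span-crossing if $j\in\mathcal{J}_i$ for some $2\le i\le k+1$ and $span_j$ intersects (in a set of positive length) more than one interval of $I_{i-2}$. *)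

theory Defs
  imports "HOL-Analysis.Analysis"
begin

definition ell :: "nat \<Rightarrow> nat \<Rightarrow> nat \<Rightarrow> real" where
  "ell q T i = real T / real q ^ (i + 1)"

definition grid_points :: "nat \<Rightarrow> nat \<Rightarrow> real \<Rightarrow> nat \<Rightarrow> real set" where
  "grid_points q T r0 i =
     {0, real T} \<union> ({x. \<exists>s::int. x = r0 + real_of_int s * ell q T i} \<inter> {0<..<real T})"

definition level_partition :: "nat \<Rightarrow> nat \<Rightarrow> real \<Rightarrow> nat \<Rightarrow> real set set" where
  "level_partition q T r0 i =
     {{a..b} | a b. a \<in> grid_points q T r0 i \<and> b \<in> grid_points q T r0 i \<and> a < b \<and>
                    {a<..<b} \<inter> grid_points q T r0 i = {}}"

text \<open>Job classes J_0,...,J_{k+1}, with lambda = 1/eps; L is the span length d_j - r_j.\<close>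
definition in_class :: "real \<Rightarrow> nat \<Rightarrow> nat \<Rightarrow> nat \<Rightarrow> nat \<Rightarrow> real \<Rightarrow> bool" where
  "in_class eps q T k i L =
     (if i = 0 then L \<ge> (1/eps) * ell q T 0
      else if i \<le> k then (1/eps) * ell q T i \<le> L \<and> L < (1/eps) * ell q T (i - 1)
      else if i = k + 1 then L < (1/eps) * ell q T k
      else False)"

definition span_crossing :: "real \<Rightarrow> nat \<Rightarrow> nat \<Rightarrow> nat \<Rightarrow> real \<Rightarrow> int \<Rightarrow> int \<Rightarrow> bool" where
  "span_crossing eps q T k r0 rj dj =
     (\<exists>i \<in> {2..k+1}. in_class eps q T k i (real_of_int (dj - rj)) \<and>
        (\<exists>I1 \<in> level_partition q T r0 (i - 2). \<exists>I2 \<in> level_partition q T r0 (i - 2).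
           I1 \<noteq> I2 \<and>
           measure lborel (I1 \<inter> {real_of_int rj..real_of_int dj}) > 0 \<and>
           measure lborel (I2 \<inter> {real_of_int rj..real_of_int dj}) > 0))"

end

theory Submission
  imports Defs
begin

text \<open>A job of class \<open>i \<ge> 2\<close> has span shorter than \<open>\<epsilon> \<ell>\<^sub>i\<^sub>-\<^sub>2\<close>. It can meet two cells
  of \<open>I\<^sub>i\<^sub>-\<^sub>2\<close> only if a cut point lies strictly inside the span; as spans lie in
  \<open>[0, T]\<close>, that cut point is a lattice point \<open>r\<^sub>0 + s \<ell>\<^sub>i\<^sub>-\<^sub>2\<close>. The offsets whose
  lattice \<open>r\<^sub>0 + \<ell>\<int>\<close> meets an open interval of length \<open>L \<le> \<ell>\<close> form an
  \<open>\<ell>\<close>-periodic set of density \<open>L/\<ell>\<close>, so a job crosses with probability less than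
  \<open>\<epsilon> = \<lambda>/q\<close>, and linearity of expectation sums this over \<open>S\<close>.\<close>

lemma nn_integral_card_le:
  assumes "finite S"
    and sets: "\<And>j. j \<in> S \<Longrightarrow> C j \<in> sets M"
    and cover: "\<And>j x. j \<in> S \<Longrightarrow> P j x \<Longrightarrow> x \<in> C j"
    and bound: "\<And>j. j \<in> S \<Longrightarrow> emeasure M (C j) \<le> ennreal c"
    and "c \<ge> 0"
  shows "(\<integral>\<^sup>+ x. ennreal (real (card {j \<in> S. P j x})) \<partial>M) \<le> ennreal (c * real (card S))"
proof -
  have pointwise: "ennreal (real (card {j \<in> S. P j x})) \<le> (\<Sum>j\<in>S. indicator (C j) x)" for x
  proof -
    have "real (card {j \<in> S. P j x}) \<le> real (card {j \<in> S. x \<in> C j})"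
      using \<open>finite S\<close> cover by (intro of_nat_mono card_mono) auto
    also have "\<dots> = (\<Sum>j\<in>S. indicator (C j) x)"
      unfolding real_of_card sum.inter_filter[OF \<open>finite S\<close>] by (simp add: indicator_def of_bool_def)
    finally have "ennreal (real (card {j \<in> S. P j x})) \<le> ennreal (\<Sum>j\<in>S. indicator (C j) x)"
      by (rule ennreal_leI)
    also have "\<dots> = (\<Sum>j\<in>S. indicator (C j) x)"
      by (simp add: sum_ennreal[symmetric] ennreal_indicator del: sum_ennreal)
    finally show ?thesis .
  qed
  have "(\<integral>\<^sup>+ x. ennreal (real (card {j \<in> S. P j x})) \<partial>M) \<le> (\<integral>\<^sup>+ x. (\<Sum>j\<in>S. indicator (C j) x) \<partial>M)"
    by (intro nn_integral_mono pointwise)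
  also have "\<dots> = (\<Sum>j\<in>S. emeasure M (C j))"
    using sets by (simp add: nn_integral_sum nn_integral_indicator)
  also have "\<dots> \<le> (\<Sum>j\<in>S. ennreal c)"
    by (intro sum_mono bound)
  also have "\<dots> = ennreal (\<Sum>j\<in>S. c)"
    using \<open>c \<ge> 0\<close> by (rule sum_ennreal)
  also have "\<dots> = ennreal (c * real (card S))"
    by (simp add: mult.commute)
  finally show ?thesis .
qed

definition lattice_meets :: "real \<Rightarrow> real \<Rightarrow> real \<Rightarrow> real set" where
  "lattice_meets a b l = {x. \<exists>s::int. x + of_int s * l \<in> {a<..<b}}"

lemma open_lattice_meets: "open (lattice_meets a b l)"
proof -
  have "lattice_meets a b l = (\<Union>s::int. {a - of_int s * l <..< b - of_int s * l})"
    unfolding lattice_meets_def by (auto simp: less_diff_eq diff_less_eq)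
  then show ?thesis by auto
qed

lemma lattice_meets_empty: "b \<le> a \<Longrightarrow> lattice_meets a b l = {}"
  unfolding lattice_meets_def by auto

lemma lattice_translate_into_window:
  fixes a u l :: real
  assumes "l > 0"
  obtains s :: int where "a - of_int s * l \<in> {u..<u + l}"
proof
  let ?s = "\<lfloor>(a - u) / l\<rfloor>"
  have "of_int ?s \<le> (a - u) / l" "(a - u) / l < of_int ?s + 1"
    using floor_correct[of "(a - u) / l"] by simp_all
  then have "of_int ?s * l \<le> a - u" "a - u < (of_int ?s + 1) * l"
    using \<open>l > 0\<close> by (simp_all only: pos_le_divide_eq pos_divide_less_eq)
  then show "a - of_int ?s * l \<in> {u..<u + l}"
    by (simp add: algebra_simps)
qed

text \<open>With \<open>c\<close> the translate of \<open>a\<close> in the window, only the translates \<open>(c, c + L)\<close>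
  and \<open>(c - l, c - l + L)\<close> of \<open>(a, b)\<close> can meet the window.\<close>
lemma lattice_meets_window_subset:
  assumes "l > 0" "b - a \<le> l" and c: "c = a - of_int s0 * l" "c \<in> {u..<u + l}"
  shows "lattice_meets a b l \<inter> {u..u + l} \<subseteq> {c..min (c + (b - a)) (u + l)} \<union> {u..c + (b - a) - l}"
proof
  fix x assume "x \<in> lattice_meets a b l \<inter> {u..u + l}"
  then obtain s :: int where x: "a < x + of_int s * l" "x + of_int s * l < b" "u \<le> x" "x \<le> u + l"
    unfolding lattice_meets_def by auto
  define n where "n = s0 - s"
  have lo: "c + of_int n * l < x" and hi: "x < c + of_int n * l + (b - a)"
    using x(1,2) unfolding c(1) n_def by (simp_all add: algebra_simps)
  have "u \<le> c" "c < u + l" using c(2) by auto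
  then have "of_int n * l < 1 * l" "of_int (-2) * l < of_int n * l"
    using lo hi x(3,4) \<open>b - a \<le> l\<close> by linarith+
  then have "n < 1" "-2 < n"
    using \<open>l > 0\<close> by (simp_all only: mult_less_cancel_right_pos of_int_less_iff of_int_1)
  then have "n = 0 \<or> n = -1" by linarith
  then show "x \<in> {c..min (c + (b - a)) (u + l)} \<union> {u..c + (b - a) - l}"
  proof
    assume "n = 0"
    then show ?thesis using lo hi x(4) by simp
  next
    assume "n = -1"
    then show ?thesis using hi x(3) by simp
  qed
qed

lemma emeasure_lattice_meets_window:
  assumes "l > 0" "a \<le> b" "b - a \<le> l"
  shows "emeasure lborel (lattice_meets a b l \<inter> {u..u + l}) \<le> ennreal (b - a)"
proof -
  obtain s0 :: int where c: "a - of_int s0 * l \<in> {u..<u + l}"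
    using lattice_translate_into_window \<open>l > 0\<close> by blast
  define c where "c = a - of_int s0 * l"
  have "emeasure lborel (lattice_meets a b l \<inter> {u..u + l})
      \<le> emeasure lborel ({c..min (c + (b - a)) (u + l)} \<union> {u..c + (b - a) - l})"
    using lattice_meets_window_subset[OF assms(1,3) c_def] c unfolding c_def
    by (intro emeasure_mono) auto
  also have "\<dots> \<le> emeasure lborel {c..min (c + (b - a)) (u + l)} + emeasure lborel {u..c + (b - a) - l}"
    by (rule emeasure_subadditive) auto
  also have "\<dots> = ennreal (max (min (c + (b - a)) (u + l) - c) 0) + ennreal (max (c + (b - a) - l - u) 0)"
    unfolding emeasure_lborel_Icc_eq
    by (intro arg_cong2[where f="(+)"] arg_cong[where f=ennreal]) auto
  also have "\<dots> = ennreal (max (min (c + (b - a)) (u + l) - c) 0 + max (c + (b - a) - l - u) 0)"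
    by (rule ennreal_plus[symmetric]) auto
  also have "\<dots> \<le> ennreal (b - a)"
    using c \<open>a \<le> b\<close> unfolding c_def[symmetric] by (intro ennreal_leI) (auto simp: max_def min_def)
  finally show ?thesis .
qed

lemma emeasure_lattice_meets_le:
  assumes "l > 0" "a \<le> b" "b - a \<le> l"
  shows "emeasure lborel (lattice_meets a b l \<inter> {0..real N * l}) \<le> ennreal (real N * (b - a))"
proof (induction N)
  case 0
  have "emeasure lborel (lattice_meets a b l \<inter> {0..real 0 * l}) \<le> emeasure lborel {0::real}"
    by (rule emeasure_mono) auto
  then show ?case by simp
next
  case (Suc N)
  let ?B = "lattice_meets a b l"
  have "real (Suc N) * l = real N * l + l" by (simp add: algebra_simps)
  then have "{0..real (Suc N) * l} = {0..real N * l} \<union> {real N * l..real N * l + l}"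
    using \<open>l > 0\<close> by (simp add: ivl_disj_un_two_touch(4))
  then have "emeasure lborel (?B \<inter> {0..real (Suc N) * l})
      \<le> emeasure lborel (?B \<inter> {0..real N * l}) + emeasure lborel (?B \<inter> {real N * l..real N * l + l})"
    using open_lattice_meets by (simp add: Int_Un_distrib emeasure_subadditive)
  also have "\<dots> \<le> ennreal (real N * (b - a)) + ennreal (b - a)"
    by (intro add_mono Suc emeasure_lattice_meets_window assms)
  also have "\<dots> = ennreal (real N * (b - a) + (b - a))"
    using \<open>a \<le> b\<close> by (intro ennreal_plus[symmetric]) auto
  also have "\<dots> = ennreal (real (Suc N) * (b - a))"
    by (simp add: algebra_simps)
  finally show ?case .
qed

lemma emeasure_uniform_lattice_meets_le:
  assumes "l > 0" "N > 0" "b - a \<le> l"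
  shows "emeasure (uniform_measure lborel {0..real N * l}) (lattice_meets a b l) \<le> ennreal ((b - a) / l)"
proof (cases "a \<le> b")
  case False
  then show ?thesis by (simp add: lattice_meets_empty)
next
  case True
  have "emeasure (uniform_measure lborel {0..real N * l}) (lattice_meets a b l)
      = emeasure lborel (lattice_meets a b l \<inter> {0..real N * l}) / ennreal (real N * l)"
    using open_lattice_meets assms(1,2) by (simp add: emeasure_uniform_measure Int_commute)
  also have "\<dots> \<le> ennreal (real N * (b - a)) / ennreal (real N * l)"
    using assms True by (intro divide_right_mono_ennreal emeasure_lattice_meets_le)
  also have "\<dots> = ennreal (real N * (b - a) / (real N * l))"
    using assms True by (intro divide_ennreal) auto
  also have "\<dots> = ennreal ((b - a) / l)"
    using assms(2) by simp
  finally show ?thesis .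
qed

lemma ell_antimono:
  assumes "q \<ge> 1" "i \<le> i'"
  shows "ell q T i' \<le> ell q T i"
  unfolding ell_def using assms by (intro divide_left_mono power_increasing) auto

lemma in_class_lower: "i \<le> k \<Longrightarrow> in_class eps q T k i L \<Longrightarrow> (1/eps) * ell q T i \<le> L"
  unfolding in_class_def by (auto split: if_splits)

lemma in_class_upper: "1 \<le> i \<Longrightarrow> in_class eps q T k i L \<Longrightarrow> L < (1/eps) * ell q T (i - 1)"
  unfolding in_class_def by (auto split: if_splits)

lemma in_class_unique:
  assumes "eps > 0" "q \<ge> 1" "in_class eps q T k i L" "in_class eps q T k i' L"
  shows "i = i'"
proof -
  have False if "i < i'" "in_class eps q T k i L" "in_class eps q T k i' L" for i i'
  proof -
    have "i \<le> k" using \<open>i < i'\<close> \<open>in_class eps q T k i' L\<close> unfolding in_class_def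
      by (auto split: if_splits)
    have "(1/eps) * ell q T i \<le> L"
      using in_class_lower \<open>i \<le> k\<close> that(2) .
    also have "L < (1/eps) * ell q T (i' - 1)"
      using in_class_upper that by simp
    also have "\<dots> \<le> (1/eps) * ell q T i"
      using assms(1,2) \<open>i < i'\<close> by (intro mult_left_mono ell_antimono) auto
    finally show False by simp
  qed
  then show ?thesis using assms(3,4) by (cases i i' rule: linorder_cases) auto
qed

lemma eps_bounds_of_q:
  assumes eps: "eps > 0" and q: "real q = 1 / eps ^ 2"
  shows "eps \<le> 1" "eps \<le> (1/eps + 1) / real q"
proof -
  have "real q > 0" using q eps by simp
  then have "q \<ge> 1" by simp
  have "eps ^ 2 = 1 / real q" using q by simp
  also have "\<dots> \<le> 1" using \<open>q \<ge> 1\<close> by simp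
  finally show "eps \<le> 1" using eps by (simp add: power_le_one_iff)
  have "eps = (1/eps) / real q"
    using q eps \<open>real q > 0\<close> by (simp add: field_simps power2_eq_square)
  also have "\<dots> \<le> (1/eps + 1) / real q"
    using \<open>real q > 0\<close> by (intro divide_right_mono) auto
  finally show "eps \<le> (1/eps + 1) / real q" .
qed

text \<open>Because \<open>\<lambda> \<ell>\<^sub>i\<^sub>-\<^sub>1 = (\<lambda>/q) \<ell>\<^sub>i\<^sub>-\<^sub>2 = \<epsilon> \<ell>\<^sub>i\<^sub>-\<^sub>2\<close>.\<close>
lemma in_class_span_less:
  assumes "eps > 0" "real q = 1 / eps ^ 2" "2 \<le> i" "in_class eps q T k i L"
  shows "L < eps * ell q T (i - 2)"
proof -
  obtain m where "i = m + 2" using \<open>2 \<le> i\<close> by (metis le_add_diff_inverse2)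
  then have "ell q T (i - 1) = ell q T (i - 2) / real q"
    unfolding ell_def by simp
  then have "(1/eps) * ell q T (i - 1) = eps * ell q T (i - 2)"
    using assms(1,2) by (simp add: field_simps power2_eq_square)
  then show ?thesis using in_class_upper[OF _ assms(4)] \<open>2 \<le> i\<close> by simp
qed

lemma measure_Icc_inter_pos_imp:
  assumes "measure lborel ({x..y} \<inter> {a..b::real}) > 0"
  shows "a < y" "x < b"
proof -
  have "measure lborel {max x a..min y b} > 0"
    using assms by (simp only: Int_atLeastAtMost)
  then have "max x a < min y b"
    by (simp split: if_splits)
  then show "a < y" "x < b" by simp_all
qed

lemma level_partition_cut_between:
  assumes "I1 \<in> level_partition q T r0 m" "I2 \<in> level_partition q T r0 m" "I1 \<noteq> I2"
    and "measure lborel (I1 \<inter> {a..b}) > 0" "measure lborel (I2 \<inter> {a..b}) > 0"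
  shows "\<exists>g\<in>grid_points q T r0 m. a < g \<and> g < b"
proof -
  let ?G = "grid_points q T r0 m"
  have cell: "\<exists>x y. I = {x..y} \<and> x \<in> ?G \<and> y \<in> ?G \<and> x < y \<and> {x<..<y} \<inter> ?G = {}
                \<and> a < y \<and> x < b"
    if "I \<in> level_partition q T r0 m" "measure lborel (I \<inter> {a..b}) > 0" for I
    using that measure_Icc_inter_pos_imp unfolding level_partition_def by blast
  obtain x y x' y' where
      I1: "I1 = {x..y}" "x \<in> ?G" "y \<in> ?G" "x < y" "{x<..<y} \<inter> ?G = {}" "a < y" "x < b" and
      I2: "I2 = {x'..y'}" "x' \<in> ?G" "y' \<in> ?G" "x' < y'" "{x'<..<y'} \<inter> ?G = {}" "a < y'" "x' < b"
    using cell[OF assms(1,4)] cell[OF assms(2,5)] by blast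
  text \<open>Distinct cells do not overlap, so the left endpoint of the right one lies inside the span.\<close>
  consider "y \<le> x'" | "y' \<le> x"
    using I1 I2 \<open>I1 \<noteq> I2\<close> by (metis disjoint_iff greaterThanLessThan_iff linorder_neqE_linordered_idom not_le)
  then show ?thesis
    using I1 I2 by cases auto
qed

definition crossing_offsets :: "real \<Rightarrow> nat \<Rightarrow> nat \<Rightarrow> nat \<Rightarrow> int \<Rightarrow> int \<Rightarrow> real set" where
  "crossing_offsets eps q T k rj dj =
     (\<Union>i\<in>{i\<in>{2..k+1}. in_class eps q T k i (real_of_int (dj - rj))}.
        lattice_meets (real_of_int rj) (real_of_int dj) (ell q T (i - 2)))"

lemma span_crossing_imp_crossing_offsets:
  assumes "0 \<le> rj" "dj \<le> int T" "span_crossing eps q T k r0 rj dj"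
  shows "r0 \<in> crossing_offsets eps q T k rj dj"
proof -
  obtain i I1 I2 where i: "i \<in> {2..k+1}" "in_class eps q T k i (real_of_int (dj - rj))"
    and g: "I1 \<in> level_partition q T r0 (i - 2)" "I2 \<in> level_partition q T r0 (i - 2)" "I1 \<noteq> I2"
      "measure lborel (I1 \<inter> {real_of_int rj..real_of_int dj}) > 0"
      "measure lborel (I2 \<inter> {real_of_int rj..real_of_int dj}) > 0"
    using assms(3) unfolding span_crossing_def by blast
  obtain g where g: "g \<in> grid_points q T r0 (i - 2)" "real_of_int rj < g" "g < real_of_int dj"
    using level_partition_cut_between[OF g] by blast
  have "0 < g" "g < real T"
    using g(2,3) assms(1,2) by (linarith, simp add: order_less_le_trans)
  then obtain s :: int where "g = r0 + of_int s * ell q T (i - 2)"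
    using g(1) unfolding grid_points_def by auto
  then have "r0 \<in> lattice_meets (real_of_int rj) (real_of_int dj) (ell q T (i - 2))"
    unfolding lattice_meets_def using g by auto
  then show ?thesis
    unfolding crossing_offsets_def using i by blast
qed

lemma crossing_offsets_probability_le:
  assumes eps: "eps > 0" and q: "real q = 1 / eps ^ 2" and "T = q ^ k"
  shows "emeasure (uniform_measure lborel {0..real T / real q}) (crossing_offsets eps q T k rj dj)
           \<le> ennreal ((1/eps + 1) / real q)"
proof (cases "\<exists>i\<in>{2..k+1}. in_class eps q T k i (real_of_int (dj - rj))")
  case False
  then have no_class: "{i\<in>{2..k+1}. in_class eps q T k i (real_of_int (dj - rj))} = {}" by blast
  show ?thesis unfolding crossing_offsets_def no_class by simp
next
  case True
  then obtain i where i: "i \<in> {2..k+1}" "in_class eps q T k i (real_of_int (dj - rj))" ..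
  define a where "a = real_of_int rj"
  define b where "b = real_of_int dj"
  define l where "l = ell q T (i - 2)"
  have "real q > 0" using q eps by simp
  then have "q \<ge> 1" by simp
  have "{i\<in>{2..k+1}. in_class eps q T k i (real_of_int (dj - rj))} = {i}"
    using i in_class_unique[OF eps \<open>q \<ge> 1\<close> _ i(2)] by blast
  then have offsets: "crossing_offsets eps q T k rj dj = lattice_meets a b l"
    unfolding crossing_offsets_def a_def b_def l_def by simp
  have "l > 0"
    unfolding l_def ell_def \<open>T = q ^ k\<close> using \<open>real q > 0\<close> by simp
  have window: "real T / real q = real (q ^ (i - 2)) * l"
    unfolding l_def ell_def using \<open>real q > 0\<close> by (simp add: field_simps)
  have span: "b - a < eps * l"
    using in_class_span_less[OF eps q _ i(2)] i(1) unfolding a_def b_def l_def by simp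
  also have "\<dots> \<le> l"
    using eps_bounds_of_q(1)[OF eps q] \<open>l > 0\<close> by simp
  finally have "b - a \<le> l" by simp
  have "(b - a) / l \<le> eps"
    using span \<open>l > 0\<close> by (simp add: pos_divide_le_eq)
  also have "eps \<le> (1/eps + 1) / real q"
    using eps_bounds_of_q(2)[OF eps q] .
  finally have ratio: "(b - a) / l \<le> (1/eps + 1) / real q" .
  have "emeasure (uniform_measure lborel {0..real T / real q}) (lattice_meets a b l) \<le> ennreal ((b - a) / l)"
    unfolding window using \<open>l > 0\<close> \<open>real q > 0\<close> \<open>b - a \<le> l\<close>
    by (intro emeasure_uniform_lattice_meets_le) auto
  then show ?thesis
    unfolding offsets using ratio by (auto intro: order_trans ennreal_leI)
qed

theorem mainTheorem6:
  fixes eps :: real and q k T :: nat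
    and r d p :: "'j \<Rightarrow> int" and J S :: "'j set"
  assumes eps_pos: "eps > 0"
    and q_def: "real q = 1 / eps ^ 2"
    and T_def: "T = q ^ k"
    and finJ: "finite J"
    and SJ: "S \<subseteq> J"
    and jobs: "\<forall>j\<in>J. 0 \<le> r j \<and> r j \<le> int T \<and> 0 \<le> d j \<and> d j \<le> int T \<and> 0 \<le> p j \<and> p j \<le> int T"
  shows "(\<integral>\<^sup>+ r0. ennreal (real (card {j \<in> S. span_crossing eps q T k r0 (r j) (d j)}))
            \<partial>(uniform_measure lborel {0..real T / real q}))
         \<le> ennreal ((1 / eps + 1) / real q * real (card S))"
proof (rule nn_integral_card_le)
  show "finite S" using finite_subset[OF SJ finJ] .
  show "crossing_offsets eps q T k (r j) (d j) \<in> sets (uniform_measure lborel {0..real T / real q})" for j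
    unfolding crossing_offsets_def using open_lattice_meets by auto
  show "r0 \<in> crossing_offsets eps q T k (r j) (d j)"
    if "j \<in> S" "span_crossing eps q T k r0 (r j) (d j)" for j r0
    using span_crossing_imp_crossing_offsets that jobs SJ by blast
  show "emeasure (uniform_measure lborel {0..real T / real q}) (crossing_offsets eps q T k (r j) (d j))
      \<le> ennreal ((1 / eps + 1) / real q)" for j
    by (rule crossing_offsets_probability_le[OF eps_pos q_def T_def])
  show "0 \<le> (1 / eps + 1) / real q" using eps_pos by simp
qed

end
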